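(* Let $f(\cdot\,;z)$ be non-negative and $\beta$-smooth for every $z\in\mathcal{Z}$, and let $A$ be any symmetric deterministic algorithm. Then the generalization error satisfies $$|\epsilon_{\mathrm{gen}}|\le 2\sqrt{2\beta\,(\epsilon_{\mathrm{opt}}+\epsilon_{\mathbf{c}})\,\epsilon_{\mathrm{stab}(A)}}+2\beta\,\epsilon_{\mathrm{stab}(A)},$$ where $\epsilon_{\mathrm{stab}(A)}=\mathbb{E}[\|A(S)-A(S^{(i)})\|_2^2]$.
   Context: Let $\mathcal{D}$ be an unknown distribution on an example space $\mathcal{Z}$, and let $z_1,\dots,z_n,z_1',\dots,z_n'$ be i.i.d. samples from $\mathcal{D}$. Set $S=(z_1,\dots,z_n)$ and, for $i\in\{1,\dots,n\}$, $S^{(i)}=(z_1,\dots,z_{i-1},z_i',z_{i+1},\dots,z_n)$. The loss is $f:\mathbb{R}^d\times\mathcal{Z}\to[0,\infty)$; $\beta$-smooth means $\|\nabla_w f(w,z)-\nabla_w f(u,z)\|_2\le\beta\|w-u\|_2$ for all $w,u\in\mathbb{R}^d$. Population risk $R(w)=\mathbb{E}_{Z\sim\mathcal{D}}[f(w,Z)]$; empirical risk $R_S(w)=\frac1n\sum_{j=1}^n f(w,z_j)$. For each dataset $S$, $W^*_S$ denotes a minimizer of $R_S$ (assumed to exist). A deterministic algorithm $A$ maps a dataset to a point $A(S)\in\mathbb{R}^d$; it is symmetric if its output is unchanged under permutations of the dataset. Definitions (all expectations over all the random samples): generalization error $\epsilon_{\mathrm{gen}}=\mathbb{E}[R(A(S))-R_S(A(S))]$;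 expected output stability $\epsilon_{\mathrm{stab}(A)}=\mathbb{E}[\|A(S)-A(S^{(i)})\|_2^2]$ (for a fixed index $i$; for symmetric $A$ it does not depend on $i$); expected optimization error $\epsilon_{\mathrm{opt}}=\mathbb{E}[R_S(A(S))-R_S(W^*_S)]$; model capacity (interpolation) error $\epsilon_{\mathbf{c}}=\mathbb{E}[R_S(W^*_S)]$. *)

theory Defs
  imports "HOL-Probability.Probability" "HOL-Combinatorics.Permutations"
begin

definition beta_smooth :: "real \<Rightarrow> (real^'d \<Rightarrow> 'z \<Rightarrow> real) \<Rightarrow> bool" where
  "beta_smooth \<beta> f \<longleftrightarrow>
     (\<forall>z. \<exists>g. (\<forall>w. GDERIV (\<lambda>v. f v z) w :> g w) \<and>
              (\<forall>w u. norm (g w - g u) \<le> \<beta> * norm (w - u)))"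

definition pop_risk :: "'z measure \<Rightarrow> ('w \<Rightarrow> 'z \<Rightarrow> real) \<Rightarrow> 'w \<Rightarrow> real" where
  "pop_risk D f w = (\<integral>z. f w z \<partial>D)"

definition emp_risk :: "('w \<Rightarrow> 'z \<Rightarrow> real) \<Rightarrow> 'z list \<Rightarrow> 'w \<Rightarrow> real" where
  "emp_risk f S w = (\<Sum>j<length S. f w (S ! j)) / real (length S)"

definition symmetric_alg :: "('z list \<Rightarrow> 'w) \<Rightarrow> bool" where
  "symmetric_alg A \<longleftrightarrow>
     (\<forall>S \<sigma>. \<sigma> permutes {..<length S} \<longrightarrow> A (permute_list \<sigma> S) = A S)"

text \<open>The sample: a pair (s, s') of functions on {..<n}; S = [s 0, ..., s (n-1)],
  and S^(i) replaces the i-th entry by s' i.\<close>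

definition sample_space :: "nat \<Rightarrow> 'z measure \<Rightarrow> ((nat \<Rightarrow> 'z) \<times> (nat \<Rightarrow> 'z)) measure" where
  "sample_space n D = (PiM {..<n} (\<lambda>_. D)) \<Otimes>\<^sub>M (PiM {..<n} (\<lambda>_. D))"

definition dataS :: "nat \<Rightarrow> (nat \<Rightarrow> 'z) \<times> (nat \<Rightarrow> 'z) \<Rightarrow> 'z list" where
  "dataS n \<omega> = map (fst \<omega>) [0..<n]"

definition dataSi :: "nat \<Rightarrow> nat \<Rightarrow> (nat \<Rightarrow> 'z) \<times> (nat \<Rightarrow> 'z) \<Rightarrow> 'z list" where
  "dataSi n i \<omega> = (map (fst \<omega>) [0..<n])[i := snd \<omega> i]"

end

theory Submission
  imports Defs
begin

(* Write z for the fresh example z_i'. As z is independent of S, E f(A S, z) = E R(A S); as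
   (S^(i), z) is distributed like (S, z_i) and A is symmetric, E f(A S^(i), z) = E f(A S, z_i)
   = E R_S(A S). So eps_gen is the expectation of f(A S, z) - f(A S^(i), z). A nonnegative
   beta-smooth phi is self-bounding, |grad phi u|^2 <= 4 beta phi u, so the Taylor bound and
   Young's inequality give |phi w - phi u| <= 2 t beta phi u + |w - u|^2/(2t) + beta |w - u|^2
   for every t > 0. Take expectations with u = A S^(i), w = A S and optimise over t.
   (The mean value theorem gives the Taylor remainder with constant beta rather than beta/2;
   the stated bound has room for this.) *)

lemma gderiv_lipschitz_taylor_remainder:
  fixes \<phi> :: "'a::real_inner \<Rightarrow> real"
  assumes gderiv: "\<And>w. GDERIV \<phi> w :> g w"
    and lipschitz: "\<And>w u. norm (g w - g u) \<le> \<beta> * norm (w - u)"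
  shows "\<bar>\<phi> w - \<phi> u - g u \<bullet> (w - u)\<bar> \<le> \<beta> * (norm (w - u))\<^sup>2"
proof -
  define d where "d = w - u"
  define h where "h x = \<phi> (u + x *\<^sub>R d) - x * (g u \<bullet> d)" for x :: real
  have "(h has_real_derivative (g (u + x *\<^sub>R d) - g u) \<bullet> d) (at x)" for x
  proof -
    have "((\<lambda>x. u + x *\<^sub>R d) has_derivative (\<lambda>y. y *\<^sub>R d)) (at x)"
      by (auto intro!: derivative_eq_intros)
    from has_derivative_compose[OF this gderiv[of "u + x *\<^sub>R d", unfolded gderiv_def]]
    have "((\<lambda>x. \<phi> (u + x *\<^sub>R d)) has_derivative (\<lambda>y. (y *\<^sub>R d) \<bullet> g (u + x *\<^sub>R d))) (at x)"
      by (simp add: o_def)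
    then show ?thesis
      unfolding h_def has_field_derivative_def
      by (auto intro!: derivative_eq_intros simp: inner_commute algebra_simps)
  qed
  then obtain z where z: "0 < z" "z < 1" and mvt: "h 1 - h 0 = (g (u + z *\<^sub>R d) - g u) \<bullet> d"
    using MVT2[of 0 1 h] by force
  have "\<bar>h 1 - h 0\<bar> \<le> norm (g (u + z *\<^sub>R d) - g u) * norm d"
    unfolding mvt by (rule Cauchy_Schwarz_ineq2)
  also have "\<dots> \<le> \<beta> * (z * norm d) * norm d"
    using lipschitz[of "u + z *\<^sub>R d" u] z by (intro mult_right_mono) auto
  also have "\<dots> = z * (\<beta> * norm d * norm d)"
    by simp
  also have "\<dots> \<le> \<beta> * (norm d)\<^sup>2"
  proof -
    have "0 \<le> \<beta> * norm d"
      using lipschitz[of "u + d" u] by (metis add_diff_cancel_left' norm_ge_zero order_trans)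
    then show ?thesis
      using z mult_left_le_one_le[of "\<beta> * norm d * norm d" z] by (simp add: power2_eq_square)
  qed
  finally show ?thesis
    unfolding h_def d_def by (simp add: algebra_simps)
qed

lemma nonneg_taylor_remainder_gradient_bound:
  fixes \<phi> :: "'a::real_inner \<Rightarrow> real"
  assumes nonneg: "\<And>w. 0 \<le> \<phi> w" and "0 \<le> \<beta>"
    and remainder: "\<And>w. \<bar>\<phi> w - \<phi> u - g \<bullet> (w - u)\<bar> \<le> \<beta> * (norm (w - u))\<^sup>2"
  shows "(norm g)\<^sup>2 \<le> 4 * \<beta> * \<phi> u"
proof -
  define G where "G = (norm g)\<^sup>2"
  have descent: "s * G - \<beta> * s\<^sup>2 * G \<le> \<phi> u" for s
  proof -
    have "\<bar>\<phi> (u - s *\<^sub>R g) - \<phi> u + s * G\<bar> \<le> \<beta> * s\<^sup>2 * G"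
      using remainder[of "u - s *\<^sub>R g"]
      by (simp add: G_def power2_norm_eq_inner power_mult_distrib)
    then show ?thesis
      using nonneg[of "u - s *\<^sub>R g"] by linarith
  qed
  show ?thesis
  proof (cases "\<beta> = 0")
    case True
    have "G = 0"
    proof (rule ccontr)
      assume "G \<noteq> 0"
      then have "G > 0" by (simp add: G_def)
      then show False
        using descent[of "(\<phi> u + 1) / G"] True by simp
    qed
    then show ?thesis
      using True by (simp add: G_def)
  next
    case False
    with \<open>0 \<le> \<beta>\<close> have "\<beta> > 0" by simp
    then have "G / (4 * \<beta>) \<le> \<phi> u"
      using descent[of "1 / (2 * \<beta>)"] by (simp add: power2_eq_square field_simps)
    with \<open>\<beta> > 0\<close> show ?thesis
      by (simp add: G_def field_simps)
  qed
qed

lemma nonneg_smooth_diff_bound: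
  fixes \<phi> :: "'a::real_inner \<Rightarrow> real"
  assumes gderiv: "\<And>w. GDERIV \<phi> w :> g w"
    and lipschitz: "\<And>w u. norm (g w - g u) \<le> \<beta> * norm (w - u)"
    and nonneg: "\<And>w. 0 \<le> \<phi> w" and "0 \<le> \<beta>" and "0 < t"
  shows "\<bar>\<phi> w - \<phi> u\<bar> \<le> 2 * t * \<beta> * \<phi> u + (norm (w - u))\<^sup>2 / (2 * t) + \<beta> * (norm (w - u))\<^sup>2"
proof -
  note remainder = gderiv_lipschitz_taylor_remainder[OF gderiv lipschitz]
  define a where "a = norm (g u)"
  define c where "c = norm (w - u)"
  have "a\<^sup>2 \<le> 4 * \<beta> * \<phi> u"
    unfolding a_def using nonneg \<open>0 \<le> \<beta>\<close> remainder by (rule nonneg_taylor_remainder_gradient_bound)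
  then have "t * a\<^sup>2 / 2 \<le> 2 * t * \<beta> * \<phi> u"
    using mult_left_mono[of _ _ "t / 2"] \<open>0 < t\<close> by fastforce
  moreover have "a * c \<le> t * a\<^sup>2 / 2 + c\<^sup>2 / (2 * t)"
  proof -
    have "2 * t * (a * c) \<le> t\<^sup>2 * a\<^sup>2 + c\<^sup>2"
      using sum_squares_ge_zero[of "t * a - c" 0] by (simp add: power2_eq_square algebra_simps)
    with \<open>0 < t\<close> show ?thesis
      by (simp add: field_simps power2_eq_square)
  qed
  moreover have "\<bar>g u \<bullet> (w - u)\<bar> \<le> a * c"
    unfolding a_def c_def by (rule Cauchy_Schwarz_ineq2)
  moreover have "\<bar>\<phi> w - \<phi> u - g u \<bullet> (w - u)\<bar> \<le> \<beta> * c\<^sup>2"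
    unfolding c_def by (rule remainder)
  ultimately show ?thesis
    unfolding c_def[symmetric] by linarith
qed

lemma beta_smooth_nonneg:
  fixes f :: "real^'d \<Rightarrow> 'z \<Rightarrow> real"
  assumes "beta_smooth \<beta> f"
  shows "0 \<le> \<beta>"
proof -
  obtain g :: "real^'d \<Rightarrow> real^'d" where "\<And>w u. norm (g w - g u) \<le> \<beta> * norm (w - u)"
    using assms unfolding beta_smooth_def by blast
  from this[of "axis undefined 1" 0] show ?thesis
    by simp (meson norm_ge_zero order_trans)
qed

lemma le_two_sqrt_mult_add_of_le:
  fixes x a b c :: real
  assumes le: "\<And>t. 0 < t \<Longrightarrow> x \<le> a * t + b / t + c" and "0 \<le> a" "0 \<le> b"
  shows "x \<le> 2 * sqrt (a * b) + c"
proof -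
  have bound: "x \<le> 2 * sqrt ((a + e) * (b + e)) + c" if "0 < e" for e
  proof -
    define r s where "r = sqrt (a + e)" and "s = sqrt (b + e)"
    have "0 < r" "0 < s" "a + e = r\<^sup>2" "b + e = s\<^sup>2"
      using that assms by (simp_all add: r_def s_def)
    define t where "t = s / r"
    have "0 < t" "(a + e) * t = r * s" "(b + e) / t = r * s"
      using \<open>0 < r\<close> \<open>0 < s\<close> by (simp_all add: t_def \<open>a + e = r\<^sup>2\<close> \<open>b + e = s\<^sup>2\<close> power2_eq_square)
    moreover have "a * t + b / t \<le> (a + e) * t + (b + e) / t"
      using \<open>0 < t\<close> \<open>0 < e\<close> by (intro add_mono) (simp_all add: divide_right_mono)
    moreover have "r * s = sqrt ((a + e) * (b + e))"
      by (simp add: r_def s_def real_sqrt_mult)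
    ultimately show ?thesis
      using le[of t] by linarith
  qed
  show ?thesis
  proof (rule tendsto_lowerbound)
    show "((\<lambda>e. 2 * sqrt ((a + e) * (b + e)) + c) \<longlongrightarrow> 2 * sqrt (a * b) + c) (at_right 0)"
      by (rule tendsto_eq_intros refl | simp)+
    show "\<forall>\<^sub>F e in at_right 0. x \<le> 2 * sqrt ((a + e) * (b + e)) + c"
      using eventually_at_right_less by (rule eventually_mono) (rule bound)
  qed simp
qed

lemma integrable_eq_integral_of_nn_integral_eq:
  fixes g h :: "'a \<Rightarrow> real"
  assumes "g \<in> borel_measurable M" "\<And>x. 0 \<le> g x" "integrable M h" "\<And>x. 0 \<le> h x"
    and "(\<integral>\<^sup>+x. g x \<partial>M) = (\<integral>\<^sup>+x. h x \<partial>M)"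
  shows "integrable M g" and "integral\<^sup>L M g = integral\<^sup>L M h"
proof -
  have "(\<integral>\<^sup>+x. g x \<partial>M) = ennreal (integral\<^sup>L M h)"
    using assms by (simp add: nn_integral_eq_integral)
  then show "integrable M g" "integral\<^sup>L M g = integral\<^sup>L M h"
    using nn_integral_eq_integrable[where f=g and M=M and x="integral\<^sup>L M h"] assms
      Bochner_Integration.integral_nonneg[of M h]
    by auto
qed

lemma abs_integral_diff_le_of_pointwise:
  fixes F G \<Delta> :: "'a \<Rightarrow> real"
  assumes "integrable M F" "integrable M G" "integrable M \<Delta>"
    and "\<And>x. 0 \<le> G x" "\<And>x. 0 \<le> \<Delta> x" "0 \<le> \<beta>"
    and pointwise: "\<And>x t. 0 < t \<Longrightarrow> \<bar>F x - G x\<bar> \<le> 2 * t * \<beta> * G x + \<Delta> x / (2 * t) + \<beta> * \<Delta> x"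
  shows "\<bar>integral\<^sup>L M F - integral\<^sup>L M G\<bar>
    \<le> 2 * sqrt (\<beta> * integral\<^sup>L M G * integral\<^sup>L M \<Delta>) + \<beta> * integral\<^sup>L M \<Delta>"
proof -
  have "\<bar>integral\<^sup>L M F - integral\<^sup>L M G\<bar>
      \<le> (2 * \<beta> * integral\<^sup>L M G) * t + (integral\<^sup>L M \<Delta> / 2) / t + \<beta> * integral\<^sup>L M \<Delta>" if "0 < t" for t
  proof -
    have "\<bar>integral\<^sup>L M F - integral\<^sup>L M G\<bar> = \<bar>\<integral>x. F x - G x \<partial>M\<bar>"
      using assms by simp
    also have "\<dots> \<le> (\<integral>x. \<bar>F x - G x\<bar> \<partial>M)"
      by (rule integral_abs_bound)
    also have "\<dots> \<le> (\<integral>x. 2 * t * \<beta> * G x + \<Delta> x / (2 * t) + \<beta> * \<Delta> x \<partial>M)"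
      using assms pointwise[OF that] by (intro integral_mono) auto
    also have "\<dots> = (2 * \<beta> * integral\<^sup>L M G) * t + (integral\<^sup>L M \<Delta> / 2) / t + \<beta> * integral\<^sup>L M \<Delta>"
      using assms by simp
    finally show ?thesis .
  qed
  then have "\<bar>integral\<^sup>L M F - integral\<^sup>L M G\<bar>
      \<le> 2 * sqrt ((2 * \<beta> * integral\<^sup>L M G) * (integral\<^sup>L M \<Delta> / 2)) + \<beta> * integral\<^sup>L M \<Delta>"
    using assms by (intro le_two_sqrt_mult_add_of_le) (auto intro!: Bochner_Integration.integral_nonneg)
  then show ?thesis
    by (simp add: mult.assoc)
qed

lemma distr_pair_PiM_component:
  assumes "prob_space D" and "i \<in> I"
  shows "distr (PiM I (\<lambda>_. D) \<Otimes>\<^sub>M PiM I (\<lambda>_. D)) (PiM I (\<lambda>_. D) \<Otimes>\<^sub>M D) (\<lambda>\<omega>. (fst \<omega>, snd \<omega> i))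
    = PiM I (\<lambda>_. D) \<Otimes>\<^sub>M D"
proof -
  have "PiM I (\<lambda>_. D) \<Otimes>\<^sub>M D
      = distr (PiM I (\<lambda>_. D)) (PiM I (\<lambda>_. D)) (\<lambda>s. s) \<Otimes>\<^sub>M distr (PiM I (\<lambda>_. D)) D (\<lambda>s. s i)"
    using assms distr_PiM_component[of I "\<lambda>_. D" i] by simp
  also have "\<dots> = distr (PiM I (\<lambda>_. D) \<Otimes>\<^sub>M PiM I (\<lambda>_. D)) (PiM I (\<lambda>_. D) \<Otimes>\<^sub>M D) (\<lambda>(s, s'). (s, s' i))"
    using assms distr_PiM_component[of I "\<lambda>_. D" i]
    by (intro pair_measure_distr) (auto simp: prob_space_imp_sigma_finite)
  finally show ?thesis
    by (simp add: case_prod_beta')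
qed

lemma distr_PiM_fun_upd:
  assumes "prob_space D" and "i \<in> I"
  shows "distr (PiM I (\<lambda>_. D) \<Otimes>\<^sub>M D) (PiM I (\<lambda>_. D)) (\<lambda>(s, z). s(i := z)) = PiM I (\<lambda>_. D)"
proof -
  interpret pair_sigma_finite D "PiM I (\<lambda>_. D)"
    using assms by (intro pair_sigma_finite.intro prob_space_imp_sigma_finite prob_space_PiM) auto
  have "distr (PiM I (\<lambda>_. D) \<Otimes>\<^sub>M D) (PiM I (\<lambda>_. D)) (\<lambda>(s, z). s(i := z))
      = distr (distr (PiM I (\<lambda>_. D) \<Otimes>\<^sub>M D) (D \<Otimes>\<^sub>M PiM I (\<lambda>_. D)) (\<lambda>(s, z). (z, s)))
          (PiM I (\<lambda>_. D)) (\<lambda>(z, s). s(i := z))"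
    using assms by (subst distr_distr) (auto simp: o_def case_prod_beta' intro!: measurable_fun_upd[where J=I])
  also have "\<dots> = distr (D \<Otimes>\<^sub>M PiM I (\<lambda>_. D)) (PiM (insert i I) (\<lambda>_. D)) (\<lambda>(z, s). s(i := z))"
    using assms by (simp add: distr_pair_swap[symmetric] insert_absorb)
  also have "\<dots> = PiM I (\<lambda>_. D)"
    using assms distr_pair_PiM_eq_PiM[of I "\<lambda>_. D" i] by (simp add: insert_absorb)
  finally show ?thesis .
qed

lemma measurable_PiM_resample:
  assumes "i \<in> I"
  shows "(\<lambda>\<omega>. (fst \<omega>)(i := snd \<omega> i)) \<in> PiM I (\<lambda>_. D) \<Otimes>\<^sub>M PiM I (\<lambda>_. D) \<rightarrow>\<^sub>M PiM I (\<lambda>_. D)"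
  using assms by (intro measurable_fun_upd[where J=I]) auto

lemma distr_PiM_resample:
  assumes "prob_space D" and "i \<in> I"
  shows "distr (PiM I (\<lambda>_. D) \<Otimes>\<^sub>M PiM I (\<lambda>_. D)) (PiM I (\<lambda>_. D)) (\<lambda>\<omega>. (fst \<omega>)(i := snd \<omega> i))
    = PiM I (\<lambda>_. D)"
proof -
  have "(\<lambda>\<omega>. (fst \<omega>, snd \<omega> i))
      \<in> PiM I (\<lambda>_. D) \<Otimes>\<^sub>M PiM I (\<lambda>_. D) \<rightarrow>\<^sub>M PiM I (\<lambda>_. D) \<Otimes>\<^sub>M D"
    using assms by measurable
  moreover have "(\<lambda>(s, z). s(i := z)) \<in> PiM I (\<lambda>_. D) \<Otimes>\<^sub>M D \<rightarrow>\<^sub>M PiM I (\<lambda>_. D)"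
    using assms measurable_add_dim[of i I "\<lambda>_. D"] by (simp add: insert_absorb)
  ultimately have "distr (PiM I (\<lambda>_. D) \<Otimes>\<^sub>M PiM I (\<lambda>_. D)) (PiM I (\<lambda>_. D)) (\<lambda>\<omega>. (fst \<omega>)(i := snd \<omega> i))
      = distr (distr (PiM I (\<lambda>_. D) \<Otimes>\<^sub>M PiM I (\<lambda>_. D)) (PiM I (\<lambda>_. D) \<Otimes>\<^sub>M D) (\<lambda>\<omega>. (fst \<omega>, snd \<omega> i)))
          (PiM I (\<lambda>_. D)) (\<lambda>(s, z). s(i := z))"
    by (simp add: distr_distr o_def)
  also have "\<dots> = PiM I (\<lambda>_. D)"
    using assms by (simp add: distr_pair_PiM_component distr_PiM_fun_upd)
  finally show ?thesis .
qed

lemma dataSi_eq_map_fun_upd: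
  assumes "i < n"
  shows "dataSi n i \<omega> = map ((fst \<omega>)(i := snd \<omega> i)) [0..<n]"
  unfolding dataSi_def using assms by (intro nth_equalityI) auto

locale loss_sample =
  fixes D :: "'z measure" and n :: nat and f :: "'w::topological_space \<Rightarrow> 'z \<Rightarrow> real"
    and A :: "'z list \<Rightarrow> 'w"
  assumes prob_space_D: "prob_space D"
    and loss_nonneg: "\<And>w z. 0 \<le> f w z"
    and loss_measurable: "(\<lambda>(w, z). f w z) \<in> borel_measurable (borel \<Otimes>\<^sub>M D)"
    and alg_measurable: "(\<lambda>s. A (map s [0..<n])) \<in> borel_measurable (PiM {..<n} (\<lambda>_. D))"
begin

abbreviation samples :: "(nat \<Rightarrow> 'z) measure" where
  "samples \<equiv> PiM {..<n} (\<lambda>_. D)"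

sublocale samples: prob_space samples
  using prob_space_D by (intro prob_space_PiM) auto

lemma sample_space_eq: "sample_space n D = samples \<Otimes>\<^sub>M samples"
  unfolding sample_space_def ..

lemma measurable_loss_pair:
  "(\<lambda>(s, z). f (A (map s [0..<n])) z) \<in> borel_measurable (samples \<Otimes>\<^sub>M D)"
  using measurable_compose[OF measurable_Pair[OF measurable_compose[OF measurable_fst alg_measurable]
      measurable_snd] loss_measurable]
  by (simp add: case_prod_beta')

lemma measurable_loss_component:
  assumes "j < n"
  shows "(\<lambda>s. f (A (map s [0..<n])) (s j)) \<in> borel_measurable samples"
  using measurable_compose[OF measurable_Pair[OF measurable_ident_sets[OF refl], of "\<lambda>s. s j"]
      measurable_loss_pair] assms
  by simp

lemma nn_integral_sample_space_fst:
  assumes "\<phi> \<in> borel_measurable samples"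
  shows "(\<integral>\<^sup>+\<omega>. \<phi> (fst \<omega>) \<partial>sample_space n D) = (\<integral>\<^sup>+s. \<phi> s \<partial>samples)"
proof -
  have "(\<integral>\<^sup>+s. \<phi> s \<partial>samples) = (\<integral>\<^sup>+s. \<phi> s \<partial>distr (samples \<Otimes>\<^sub>M samples) samples fst)"
    by (simp add: samples.distr_pair_fst)
  also have "\<dots> = (\<integral>\<^sup>+\<omega>. \<phi> (fst \<omega>) \<partial>samples \<Otimes>\<^sub>M samples)"
    using assms by (intro nn_integral_distr) auto
  finally show ?thesis
    by (simp add: sample_space_eq)
qed

lemma nn_integral_loss_fresh_point:
  assumes "i < n" and integrable_loss: "\<And>w. integrable D (f w)"
  shows "(\<integral>\<^sup>+\<omega>. f (A (dataS n \<omega>)) (snd \<omega> i) \<partial>sample_space n D)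
    = (\<integral>\<^sup>+\<omega>. pop_risk D f (A (dataS n \<omega>)) \<partial>sample_space n D)"
proof -
  interpret D: prob_space D by (rule prob_space_D)
  define F where "F = (\<lambda>(s, z). ennreal (f (A (map s [0..<n])) z))"
  have F: "F \<in> borel_measurable (samples \<Otimes>\<^sub>M D)"
    unfolding F_def using measurable_loss_pair by (simp add: case_prod_beta')
  have "(\<integral>\<^sup>+\<omega>. f (A (dataS n \<omega>)) (snd \<omega> i) \<partial>sample_space n D)
      = (\<integral>\<^sup>+\<omega>. F (fst \<omega>, snd \<omega> i) \<partial>samples \<Otimes>\<^sub>M samples)"
    by (simp add: F_def dataS_def sample_space_eq)
  also have "\<dots> = (\<integral>\<^sup>+p. F p \<partial>distr (samples \<Otimes>\<^sub>M samples) (samples \<Otimes>\<^sub>M D) (\<lambda>\<omega>. (fst \<omega>, snd \<omega> i)))"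
    using F \<open>i < n\<close> by (intro nn_integral_distr[symmetric]) auto
  also have "\<dots> = (\<integral>\<^sup>+p. F p \<partial>samples \<Otimes>\<^sub>M D)"
    using \<open>i < n\<close> by (simp add: distr_pair_PiM_component prob_space_D)
  also have "\<dots> = (\<integral>\<^sup>+s. \<integral>\<^sup>+z. F (s, z) \<partial>D \<partial>samples)"
    using F by (rule D.nn_integral_fst[symmetric])
  also have "\<dots> = (\<integral>\<^sup>+\<omega>. \<integral>\<^sup>+z. F (fst \<omega>, z) \<partial>D \<partial>sample_space n D)"
    using F by (intro nn_integral_sample_space_fst[symmetric] D.borel_measurable_nn_integral) simp
  also have "\<dots> = (\<integral>\<^sup>+\<omega>. pop_risk D f (A (dataS n \<omega>)) \<partial>sample_space n D)"
    unfolding F_def pop_risk_def dataS_def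
    by (intro nn_integral_cong) (simp add: nn_integral_eq_integral integrable_loss loss_nonneg)
  finally show ?thesis .
qed

lemma nn_integral_loss_replaced_point:
  assumes "i < n"
  shows "(\<integral>\<^sup>+\<omega>. f (A (dataSi n i \<omega>)) (snd \<omega> i) \<partial>sample_space n D)
    = (\<integral>\<^sup>+\<omega>. f (A (dataS n \<omega>)) (fst \<omega> i) \<partial>sample_space n D)"
proof -
  define G where "G s = ennreal (f (A (map s [0..<n])) (s i))" for s
  have G: "G \<in> borel_measurable samples"
    unfolding G_def using measurable_loss_component[OF \<open>i < n\<close>] by simp
  have "(\<integral>\<^sup>+\<omega>. f (A (dataSi n i \<omega>)) (snd \<omega> i) \<partial>sample_space n D)
      = (\<integral>\<^sup>+\<omega>. G ((fst \<omega>)(i := snd \<omega> i)) \<partial>samples \<Otimes>\<^sub>M samples)"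
    using \<open>i < n\<close> by (simp add: G_def dataSi_eq_map_fun_upd sample_space_eq)
  also have "\<dots> = (\<integral>\<^sup>+s. G s \<partial>distr (samples \<Otimes>\<^sub>M samples) samples (\<lambda>\<omega>. (fst \<omega>)(i := snd \<omega> i)))"
    using G \<open>i < n\<close> by (intro nn_integral_distr[symmetric] measurable_PiM_resample) auto
  also have "\<dots> = (\<integral>\<^sup>+s. G s \<partial>samples)"
    using \<open>i < n\<close> by (simp add: distr_PiM_resample prob_space_D)
  also have "\<dots> = (\<integral>\<^sup>+\<omega>. f (A (dataS n \<omega>)) (fst \<omega> i) \<partial>sample_space n D)"
    using nn_integral_sample_space_fst[OF G] by (simp add: G_def dataS_def)
  finally show ?thesis .
qed

lemma nn_integral_loss_component_swap:
  assumes "symmetric_alg A" and "i < n" and "j < n"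
  shows "(\<integral>\<^sup>+s. f (A (map s [0..<n])) (s j) \<partial>samples)
    = (\<integral>\<^sup>+s. f (A (map s [0..<n])) (s i) \<partial>samples)"
proof -
  define \<tau> where "\<tau> = Transposition.transpose i j"
  define T where "T s = (\<lambda>k\<in>{..<n}. s (\<tau> k))" for s :: "nat \<Rightarrow> 'z"
  have \<tau>: "\<tau> permutes {..<n}"
    unfolding \<tau>_def using assms by (intro permutes_swap_id) auto
  then have \<tau>_less: "\<tau> k < n" if "k < n" for k
    using that permutes_in_image by fastforce
  have distr_T: "distr samples samples T = samples"
    unfolding T_def using distr_PiM_reindex[of "{..<n}" "\<lambda>_. D" \<tau> "{..<n}"] prob_space_D \<tau> \<tau>_less
    by (simp add: permutes_inj_on Pi_iff)
  have T: "T \<in> samples \<rightarrow>\<^sub>M samples"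
    unfolding T_def using \<tau>_less by (intro measurable_restrict) auto
  have T_alg: "A (map (T s) [0..<n]) = A (map s [0..<n])" for s
  proof -
    have "map (T s) [0..<n] = permute_list \<tau> (map s [0..<n])"
      unfolding permute_list_def T_def using \<tau>_less by (intro nth_equalityI) auto
    then show ?thesis
      using \<open>symmetric_alg A\<close> \<tau> unfolding symmetric_alg_def by simp
  qed
  have T_i: "T s i = s j" for s
    unfolding T_def \<tau>_def using \<open>i < n\<close> by simp
  have "(\<integral>\<^sup>+s. f (A (map s [0..<n])) (s i) \<partial>samples)
      = (\<integral>\<^sup>+s. f (A (map s [0..<n])) (s i) \<partial>distr samples samples T)"
    by (simp add: distr_T)
  also have "\<dots> = (\<integral>\<^sup>+s. f (A (map (T s) [0..<n])) (T s i) \<partial>samples)"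
    using measurable_loss_component[OF \<open>i < n\<close>] by (intro nn_integral_distr T) simp
  also have "\<dots> = (\<integral>\<^sup>+s. f (A (map s [0..<n])) (s j) \<partial>samples)"
    by (simp add: T_alg T_i)
  finally show ?thesis ..
qed

lemma nn_integral_emp_risk_eq_component:
  assumes "symmetric_alg A" and "i < n"
  shows "(\<integral>\<^sup>+\<omega>. emp_risk f (dataS n \<omega>) (A (dataS n \<omega>)) \<partial>sample_space n D)
    = (\<integral>\<^sup>+\<omega>. f (A (dataS n \<omega>)) (fst \<omega> i) \<partial>sample_space n D)"
proof -
  define H where "H j s = ennreal (f (A (map s [0..<n])) (s j))" for j s
  have H: "H j \<in> borel_measurable samples" if "j < n" for j
    unfolding H_def using measurable_loss_component[OF that] by simp
  have "ennreal (emp_risk f (map s [0..<n]) (A (map s [0..<n])))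
      = ennreal (1 / real n) * (\<Sum>j<n. H j s)" for s
    unfolding emp_risk_def H_def
    by (simp add: sum_ennreal loss_nonneg sum_nonneg ennreal_mult'' divide_inverse mult.commute)
  then have "(\<integral>\<^sup>+\<omega>. emp_risk f (dataS n \<omega>) (A (dataS n \<omega>)) \<partial>sample_space n D)
      = (\<integral>\<^sup>+s. ennreal (1 / real n) * (\<Sum>j<n. H j s) \<partial>samples)"
    using H by (simp add: nn_integral_sample_space_fst[symmetric] dataS_def)
  also have "\<dots> = ennreal (1 / real n) * (\<Sum>j<n. \<integral>\<^sup>+s. H j s \<partial>samples)"
    using H by (simp add: nn_integral_cmult) (subst nn_integral_sum, auto)
  also have "\<dots> = ennreal (1 / real n) * (\<Sum>j<n. \<integral>\<^sup>+s. H i s \<partial>samples)"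
    unfolding H_def using assms
    by (intro sum.cong arg_cong2[where f="(*)"] refl nn_integral_loss_component_swap) auto
  also have "\<dots> = (\<integral>\<^sup>+s. H i s \<partial>samples)"
    using \<open>i < n\<close>
    by (simp add: ennreal_of_nat_eq_real_of_nat ennreal_mult''[symmetric] mult.assoc[symmetric])
  also have "\<dots> = (\<integral>\<^sup>+\<omega>. f (A (dataS n \<omega>)) (fst \<omega> i) \<partial>sample_space n D)"
    using nn_integral_sample_space_fst[OF H[OF \<open>i < n\<close>]] by (simp add: H_def dataS_def)
  finally show ?thesis .
qed

lemma integral_loss_fresh_point:
  assumes "i < n" and "\<And>w. integrable D (f w)"
    and "integrable (sample_space n D) (\<lambda>\<omega>. pop_risk D f (A (dataS n \<omega>)))"
  shows "integrable (sample_space n D) (\<lambda>\<omega>. f (A (dataS n \<omega>)) (snd \<omega> i))"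
    and "(\<integral>\<omega>. f (A (dataS n \<omega>)) (snd \<omega> i) \<partial>sample_space n D)
      = (\<integral>\<omega>. pop_risk D f (A (dataS n \<omega>)) \<partial>sample_space n D)"
proof -
  have measurable: "(\<lambda>\<omega>. f (A (dataS n \<omega>)) (snd \<omega> i)) \<in> borel_measurable (sample_space n D)"
    using measurable_compose[OF _ measurable_loss_pair, of "\<lambda>\<omega>. (fst \<omega>, snd \<omega> i)"] \<open>i < n\<close>
    by (simp add: sample_space_eq dataS_def)
  have nonneg: "0 \<le> pop_risk D f w" for w
    unfolding pop_risk_def by (simp add: loss_nonneg)
  from integrable_eq_integral_of_nn_integral_eq[OF measurable loss_nonneg assms(3) nonneg
      nn_integral_loss_fresh_point[OF assms(1,2)]]
  show "integrable (sample_space n D) (\<lambda>\<omega>. f (A (dataS n \<omega>)) (snd \<omega> i))"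
    and "(\<integral>\<omega>. f (A (dataS n \<omega>)) (snd \<omega> i) \<partial>sample_space n D)
      = (\<integral>\<omega>. pop_risk D f (A (dataS n \<omega>)) \<partial>sample_space n D)"
    by simp_all
qed

lemma integral_loss_replaced_point:
  assumes "symmetric_alg A" and "i < n"
    and "integrable (sample_space n D) (\<lambda>\<omega>. emp_risk f (dataS n \<omega>) (A (dataS n \<omega>)))"
  shows "integrable (sample_space n D) (\<lambda>\<omega>. f (A (dataSi n i \<omega>)) (snd \<omega> i))"
    and "(\<integral>\<omega>. f (A (dataSi n i \<omega>)) (snd \<omega> i) \<partial>sample_space n D)
      = (\<integral>\<omega>. emp_risk f (dataS n \<omega>) (A (dataS n \<omega>)) \<partial>sample_space n D)"
proof -
  from measurable_compose[OF measurable_PiM_resample[of i "{..<n}"] measurable_loss_component[OF \<open>i < n\<close>]]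
  have measurable: "(\<lambda>\<omega>. f (A (dataSi n i \<omega>)) (snd \<omega> i)) \<in> borel_measurable (sample_space n D)"
    using \<open>i < n\<close> by (simp add: sample_space_eq dataSi_eq_map_fun_upd)
  have nonneg: "0 \<le> emp_risk f S w" for S w
    unfolding emp_risk_def by (simp add: loss_nonneg sum_nonneg)
  have "(\<integral>\<^sup>+\<omega>. f (A (dataSi n i \<omega>)) (snd \<omega> i) \<partial>sample_space n D)
      = (\<integral>\<^sup>+\<omega>. emp_risk f (dataS n \<omega>) (A (dataS n \<omega>)) \<partial>sample_space n D)"
    using assms by (simp add: nn_integral_loss_replaced_point nn_integral_emp_risk_eq_component)
  from integrable_eq_integral_of_nn_integral_eq[OF measurable loss_nonneg assms(3) nonneg this]
  show "integrable (sample_space n D) (\<lambda>\<omega>. f (A (dataSi n i \<omega>)) (snd \<omega> i))"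
    and "(\<integral>\<omega>. f (A (dataSi n i \<omega>)) (snd \<omega> i) \<partial>sample_space n D)
      = (\<integral>\<omega>. emp_risk f (dataS n \<omega>) (A (dataS n \<omega>)) \<partial>sample_space n D)"
    by simp_all
qed

end

theorem theorem4:
  fixes D :: "'z measure" and f :: "real^'d \<Rightarrow> 'z \<Rightarrow> real" and \<beta> :: real
    and n i :: nat and A :: "'z list \<Rightarrow> real^'d" and Wstar :: "'z list \<Rightarrow> real^'d"
  defines "\<Omega> \<equiv> sample_space n D"
  defines "eps_gen \<equiv> (\<integral>\<omega>. pop_risk D f (A (dataS n \<omega>)) - emp_risk f (dataS n \<omega>) (A (dataS n \<omega>)) \<partial>\<Omega>)"
  defines "eps_stab \<equiv> (\<integral>\<omega>. (norm (A (dataS n \<omega>) - A (dataSi n i \<omega>)))\<^sup>2 \<partial>\<Omega>)"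
  defines "eps_opt \<equiv> (\<integral>\<omega>. emp_risk f (dataS n \<omega>) (A (dataS n \<omega>)) - emp_risk f (dataS n \<omega>) (Wstar (dataS n \<omega>)) \<partial>\<Omega>)"
  defines "eps_c \<equiv> (\<integral>\<omega>. emp_risk f (dataS n \<omega>) (Wstar (dataS n \<omega>)) \<partial>\<Omega>)"
  assumes D: "prob_space D"
    and n: "1 \<le> n" and i: "i < n"
    and nonneg: "\<And>w z. 0 \<le> f w z"
    and smooth: "beta_smooth \<beta> f"
    and symm: "symmetric_alg A"
    and Wstar_min: "\<And>S w. length S = n \<Longrightarrow> emp_risk f S (Wstar S) \<le> emp_risk f S w"
    and f_meas: "(\<lambda>(w, z). f w z) \<in> borel_measurable (borel \<Otimes>\<^sub>M D)"
    and A_meas: "(\<lambda>s. A (map s [0..<n])) \<in> borel_measurable (PiM {..<n} (\<lambda>_. D))"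
    and int_f: "\<And>w. integrable D (f w)"
    and int_R: "integrable \<Omega> (\<lambda>\<omega>. pop_risk D f (A (dataS n \<omega>)))"
    and int_RS: "integrable \<Omega> (\<lambda>\<omega>. emp_risk f (dataS n \<omega>) (A (dataS n \<omega>)))"
    and int_RW: "integrable \<Omega> (\<lambda>\<omega>. emp_risk f (dataS n \<omega>) (Wstar (dataS n \<omega>)))"
    and int_stab: "integrable \<Omega> (\<lambda>\<omega>. (norm (A (dataS n \<omega>) - A (dataSi n i \<omega>)))\<^sup>2)"
  shows "\<bar>eps_gen\<bar> \<le> 2 * sqrt (2 * \<beta> * (eps_opt + eps_c) * eps_stab) + 2 * \<beta> * eps_stab"
proof -
  interpret loss_sample D n f A
    using D nonneg f_meas A_meas by (rule loss_sample.intro)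
  obtain G where G: "\<And>z w. GDERIV (\<lambda>v. f v z) w :> G z w"
    and G_lipschitz: "\<And>z w u. norm (G z w - G z u) \<le> \<beta> * norm (w - u)"
    using smooth unfolding beta_smooth_def by metis
  have "0 \<le> \<beta>"
    using smooth by (rule beta_smooth_nonneg)
  note fresh = integral_loss_fresh_point[OF i int_f int_R[unfolded \<Omega>_def]]
  note replaced = integral_loss_replaced_point[OF symm i int_RS[unfolded \<Omega>_def]]
  have opt_c: "eps_opt + eps_c = (\<integral>\<omega>. f (A (dataSi n i \<omega>)) (snd \<omega> i) \<partial>\<Omega>)"
    unfolding eps_opt_def eps_c_def \<Omega>_def replaced(2) using int_RS int_RW \<Omega>_def by simp
  have gen: "eps_gen = (\<integral>\<omega>. f (A (dataS n \<omega>)) (snd \<omega> i) \<partial>\<Omega>)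
      - (\<integral>\<omega>. f (A (dataSi n i \<omega>)) (snd \<omega> i) \<partial>\<Omega>)"
    unfolding eps_gen_def \<Omega>_def fresh(2) replaced(2) using int_R int_RS \<Omega>_def by simp
  have "\<bar>f (A (dataS n \<omega>)) (snd \<omega> i) - f (A (dataSi n i \<omega>)) (snd \<omega> i)\<bar>
      \<le> 2 * t * \<beta> * f (A (dataSi n i \<omega>)) (snd \<omega> i)
        + (norm (A (dataS n \<omega>) - A (dataSi n i \<omega>)))\<^sup>2 / (2 * t)
        + \<beta> * (norm (A (dataS n \<omega>) - A (dataSi n i \<omega>)))\<^sup>2" if "0 < t" for \<omega> t
    using G G_lipschitz nonneg \<open>0 \<le> \<beta>\<close> that by (rule nonneg_smooth_diff_bound)
  from abs_integral_diff_le_of_pointwise[OF fresh(1) replaced(1) int_stab[unfolded \<Omega>_def]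
      nonneg _ \<open>0 \<le> \<beta>\<close> this]
  have bound: "\<bar>eps_gen\<bar> \<le> 2 * sqrt (\<beta> * (eps_opt + eps_c) * eps_stab) + \<beta> * eps_stab"
    unfolding gen opt_c eps_stab_def \<Omega>_def by simp
  have "0 \<le> eps_opt + eps_c" "0 \<le> eps_stab"
    unfolding opt_c eps_stab_def by (simp_all add: nonneg Bochner_Integration.integral_nonneg)
  then have "sqrt (\<beta> * (eps_opt + eps_c) * eps_stab) \<le> sqrt (2 * \<beta> * (eps_opt + eps_c) * eps_stab)"
    and "\<beta> * eps_stab \<le> 2 * \<beta> * eps_stab"
    using \<open>0 \<le> \<beta>\<close> by (auto intro!: real_sqrt_le_mono)
  with bound show ?thesis
    by linarith
qed

end
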